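(* Let $G$ be a finite ordered graph and let $k$ be the largest integer such that $G$ contains the ordered matching $M_k$ as an (not necessarily induced) ordered subgraph, i.e. there are vertices $a_1<_G b_1<_G a_2<_G b_2<_G\dots<_G a_k<_G b_k$ with $\{a_i,b_i\}\in E(G)$ for all $i$. Then $\chi(G)\le 2k+1$.
   Context: An ordered graph is a triple $G=(V,E,\le_G)$ where $(V,E)$ is a finite simple undirected graph and $\le_G$ is a linear order on $V$. The ordered matching $M_k$ has vertices $a_1<b_1<\dots<a_k<b_k$ and edges $\{a_i,b_i\}$. The ordered chromatic number $\chi(G)$ is the minimum number of sets in a partition of $V$ into sets that are consecutive in $\le_G$ and span no edge of $G$. *)

theory Defs
  imports Main "HOL-Library.Disjoint_Sets"
begin

text \<open>An ordered graph: a finite vertex set V of a linearly ordered type (the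
  vertex order is the restriction of the type's order to V) together with a set
  E of edges, each edge a 2-element subset of V.\<close>
definition ordered_graph :: "('a::linorder) set \<Rightarrow> 'a set set \<Rightarrow> bool" where
  "ordered_graph V E \<longleftrightarrow> finite V \<and>
     (\<forall>e\<in>E. \<exists>u v. u \<in> V \<and> v \<in> V \<and> u \<noteq> v \<and> e = {u, v})"

definition contains_matching :: "('a::linorder) set \<Rightarrow> 'a set set \<Rightarrow> nat \<Rightarrow> bool" where
  "contains_matching V E k \<longleftrightarrow>
     (\<exists>a b :: nat \<Rightarrow> 'a.
        (\<forall>i<k. a i \<in> V \<and> b i \<in> V \<and> a i < b i \<and> {a i, b i} \<in> E) \<and>
        (\<forall>i. Suc i < k \<longrightarrow> b i < a (Suc i)))"

definition consecutive :: "('a::linorder) set \<Rightarrow> 'a set \<Rightarrow> bool" where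
  "consecutive V S \<longleftrightarrow> (\<forall>x\<in>S. \<forall>y\<in>S. \<forall>z\<in>V. x \<le> z \<and> z \<le> y \<longrightarrow> z \<in> S)"

definition spans_no_edge :: "'a set set \<Rightarrow> 'a set \<Rightarrow> bool" where
  "spans_no_edge E S \<longleftrightarrow> (\<forall>e\<in>E. \<not> e \<subseteq> S)"

definition ordered_chromatic_number :: "('a::linorder) set \<Rightarrow> 'a set set \<Rightarrow> nat" where
  "ordered_chromatic_number V E =
     (LEAST m. \<exists>P. partition_on V P \<and> finite P \<and> card P = m \<and>
        (\<forall>S\<in>P. consecutive V S \<and> spans_no_edge E S))"

end

theory Submission
  imports Defs
begin

text \<open>Greedy colouring from the left. In a final segment W of the vertex order
  that contains an edge, let b be the least right endpoint of an edge inside W.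
  Then the vertices of W below b span no edge, the singleton {b} spans no edge,
  and the vertices of W above b contain no M_k whenever W contains no M_(k+1),
  because an edge ending at b can be put in front of any copy of M_k above b.
  Each step therefore costs two colours and lowers the matching number by one;
  a final segment without an edge is a single colour class.\<close>

definition final_segment :: "('a::linorder) set \<Rightarrow> 'a set \<Rightarrow> bool" where
  "final_segment V W \<longleftrightarrow> W \<subseteq> V \<and> (\<forall>x\<in>W. \<forall>y\<in>V. x \<le> y \<longrightarrow> y \<in> W)"

definition interval_colourable :: "('a::linorder) set \<Rightarrow> 'a set set \<Rightarrow> 'a set \<Rightarrow> nat \<Rightarrow> bool" where
  "interval_colourable V E W m \<longleftrightarrow> (\<exists>P. partition_on W P \<and> finite P \<and> card P \<le> m \<and>
     (\<forall>S\<in>P. consecutive V S \<and> spans_no_edge E S))"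

lemma ordered_graph_edgeE:
  assumes "ordered_graph V E" and "e \<in> E"
  obtains u v where "u \<in> V" "v \<in> V" "u < v" "e = {u, v}"
proof -
  obtain u v where "u \<in> V" "v \<in> V" "u \<noteq> v" "e = {u, v}"
    using assms unfolding ordered_graph_def by blast
  then show ?thesis
    using that[of u v] that[of v u] by (cases "u < v") (auto simp: insert_commute)
qed

lemma spans_no_edge_singleton:
  assumes "ordered_graph V E"
  shows "spans_no_edge E {x}"
  unfolding spans_no_edge_def
proof (intro ballI notI)
  fix e assume "e \<in> E" "e \<subseteq> {x}"
  with assms obtain u v where "u < v" "e = {u, v}" by (blast elim: ordered_graph_edgeE)
  with \<open>e \<subseteq> {x}\<close> show False by auto
qed

lemma consecutive_singleton: "consecutive V {x}"
  by (auto simp: consecutive_def)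

lemma final_segment_refl: "final_segment V V"
  by (simp add: final_segment_def)

lemma final_segment_consecutive: "final_segment V W \<Longrightarrow> consecutive V W"
  by (auto simp: final_segment_def consecutive_def)

lemma final_segment_above: "final_segment V W \<Longrightarrow> final_segment V {v\<in>W. b < v}"
  by (fastforce simp: final_segment_def)

lemma final_segment_finite: "ordered_graph V E \<Longrightarrow> final_segment V W \<Longrightarrow> finite W"
  by (auto simp: ordered_graph_def final_segment_def intro: finite_subset)

lemma consecutive_below: "final_segment V W \<Longrightarrow> consecutive V {v\<in>W. v < b}"
  by (fastforce simp: final_segment_def consecutive_def)

lemma interval_colourable_empty: "interval_colourable V E {} 0"
  by (auto simp: interval_colourable_def partition_on_empty)

lemma interval_colourable_mono:
  "interval_colourable V E W m \<Longrightarrow> m \<le> m' \<Longrightarrow> interval_colourable V E W m'"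
  unfolding interval_colourable_def by (meson order_trans)

lemma interval_colourable_add_part:
  assumes col: "interval_colourable V E W m" and disj: "S \<inter> W = {}"
    and "consecutive V S" and "spans_no_edge E S"
  shows "interval_colourable V E (S \<union> W) (Suc m)"
proof (cases "S = {}")
  case True
  with col show ?thesis by (auto intro: interval_colourable_mono)
next
  case False
  from col obtain P where P: "partition_on W P" "finite P" "card P \<le> m"
    "\<forall>T\<in>P. consecutive V T \<and> spans_no_edge E T"
    unfolding interval_colourable_def by blast
  have "disjnt S (\<Union>P)"
    using disj partition_onD1[OF P(1)] by (simp add: disjnt_def)
  then have "partition_on (S \<union> W) (insert S P)"
    using P(1) disj False by (simp add: partition_on_insert Diff_triv Un_Diff inf_commute)
  moreover have "card (insert S P) \<le> Suc m"
    using P(2,3) by (simp add: card_insert_if)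
  ultimately show ?thesis
    unfolding interval_colourable_def using P(2,4) assms(3,4) by blast
qed

lemma interval_colourable_single_part:
  "consecutive V W \<Longrightarrow> spans_no_edge E W \<Longrightarrow> interval_colourable V E W 1"
  using interval_colourable_add_part[OF interval_colourable_empty, of W] by simp

lemma interval_colourable_split:
  assumes "ordered_graph V E" and "final_segment V W" and "b \<in> W"
    and "spans_no_edge E {v\<in>W. v < b}"
    and "interval_colourable V E {v\<in>W. b < v} m"
  shows "interval_colourable V E W (Suc (Suc m))"
proof -
  have "interval_colourable V E ({b} \<union> {v\<in>W. b < v}) (Suc m)"
    using interval_colourable_add_part[OF assms(5), of "{b}"] assms(1)
    by (simp add: consecutive_singleton spans_no_edge_singleton)
  then have "interval_colourable V E ({v\<in>W. v < b} \<union> ({b} \<union> {v\<in>W. b < v})) (Suc (Suc m))"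
    by (rule interval_colourable_add_part) (use assms(4) consecutive_below[OF assms(2)] in auto)
  moreover have "{v\<in>W. v < b} \<union> ({b} \<union> {v\<in>W. b < v}) = W"
    using \<open>b \<in> W\<close> by auto
  ultimately show ?thesis by simp
qed

lemma edge_with_least_right_endpoint:
  assumes "ordered_graph V E" and "finite W" and "\<not> spans_no_edge E W"
  obtains x b where "x \<in> W" "b \<in> W" "x < b" "{x, b} \<in> E"
    and "spans_no_edge E {v\<in>W. v < b}"
proof -
  define R where "R = {y\<in>W. \<exists>x\<in>W. x < y \<and> {x, y} \<in> E}"
  obtain e where "e \<in> E" "e \<subseteq> W"
    using assms(3) unfolding spans_no_edge_def by blast
  with assms(1) obtain u v where "u < v" "e = {u, v}" by (blast elim: ordered_graph_edgeE)
  with \<open>e \<in> E\<close> \<open>e \<subseteq> W\<close> have "R \<noteq> {}" unfolding R_def by blast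
  moreover have "finite R" using assms(2) unfolding R_def by simp
  ultimately have "Min R \<in> R" by simp
  then obtain x where x: "x \<in> W" "Min R \<in> W" "x < Min R" "{x, Min R} \<in> E"
    unfolding R_def by blast
  have "spans_no_edge E {v\<in>W. v < Min R}"
    unfolding spans_no_edge_def
  proof (intro ballI notI)
    fix f assume "f \<in> E" and below: "f \<subseteq> {v\<in>W. v < Min R}"
    with assms(1) obtain p q where "p < q" "f = {p, q}" by (blast elim: ordered_graph_edgeE)
    with \<open>f \<in> E\<close> below have "q \<in> R" unfolding R_def by auto
    with \<open>finite R\<close> have "Min R \<le> q" by simp
    with below \<open>f = {p, q}\<close> show False by auto
  qed
  with x that show ?thesis by blast
qed

lemma contains_matching_0: "contains_matching W E 0"
  by (simp add: contains_matching_def)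

lemma contains_matching_prepend:
  assumes "contains_matching {v\<in>W. b < v} E k"
    and "x \<in> W" "b \<in> W" "x < b" "{x, b} \<in> E"
  shows "contains_matching W E (Suc k)"
proof -
  from assms(1) obtain a c where
    ac: "\<forall>i<k. a i \<in> W \<and> c i \<in> W \<and> b < a i \<and> a i < c i \<and> {a i, c i} \<in> E"
    and gaps: "\<forall>i. Suc i < k \<longrightarrow> c i < a (Suc i)"
    unfolding contains_matching_def by auto
  let ?a = "case_nat x a" and ?c = "case_nat b c"
  have "\<forall>i<Suc k. ?a i \<in> W \<and> ?c i \<in> W \<and> ?a i < ?c i \<and> {?a i, ?c i} \<in> E"
    using ac assms(2-5) by (auto simp: less_Suc_eq_0_disj)
  moreover have "\<forall>i. Suc i < Suc k \<longrightarrow> ?c i < ?a (Suc i)"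
    using ac gaps by (auto split: nat.split)
  ultimately show ?thesis unfolding contains_matching_def by blast
qed

lemma interval_colourable_if_no_matching:
  assumes "ordered_graph V E" and "final_segment V W"
    and "\<not> contains_matching W E (Suc k)"
  shows "interval_colourable V E W (2 * k + 1)"
  using assms(2,3)
proof (induction k arbitrary: W)
  case 0
  have "finite W"
    using assms(1) \<open>final_segment V W\<close> by (rule final_segment_finite)
  have "spans_no_edge E W"
  proof (rule ccontr)
    assume "\<not> spans_no_edge E W"
    then obtain x b where "x \<in> W" "b \<in> W" "x < b" "{x, b} \<in> E"
      using edge_with_least_right_endpoint[OF assms(1) \<open>finite W\<close>] by blast
    then have "contains_matching W E (Suc 0)"
      by (intro contains_matching_prepend[OF contains_matching_0])
    with "0.prems"(2) show False by simp
  qed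
  with "0.prems"(1) show ?case
    using interval_colourable_single_part final_segment_consecutive by fastforce
next
  case (Suc k)
  have "finite W"
    using assms(1) \<open>final_segment V W\<close> by (rule final_segment_finite)
  show ?case
  proof (cases "spans_no_edge E W")
    case True
    with Suc.prems(1) have "interval_colourable V E W 1"
      by (intro interval_colourable_single_part final_segment_consecutive)
    then show ?thesis by (rule interval_colourable_mono) simp
  next
    case False
    then obtain x b where edge: "x \<in> W" "b \<in> W" "x < b" "{x, b} \<in> E"
      and below: "spans_no_edge E {v\<in>W. v < b}"
      using edge_with_least_right_endpoint[OF assms(1) \<open>finite W\<close>] by blast
    have "\<not> contains_matching {v\<in>W. b < v} E (Suc k)"
      using contains_matching_prepend[OF _ edge] Suc.prems(2) by blast
    with Suc.IH Suc.prems(1) have "interval_colourable V E {v\<in>W. b < v} (2 * k + 1)"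
      by (simp add: final_segment_above)
    with interval_colourable_split[OF assms(1) Suc.prems(1) \<open>b \<in> W\<close> below]
    show ?thesis by simp
  qed
qed

lemma ordered_chromatic_number_le:
  assumes "interval_colourable V E V m"
  shows "ordered_chromatic_number V E \<le> m"
proof -
  from assms obtain P where "partition_on V P" "finite P" "card P \<le> m"
    "\<forall>S\<in>P. consecutive V S \<and> spans_no_edge E S"
    unfolding interval_colourable_def by blast
  then have "ordered_chromatic_number V E \<le> card P"
    unfolding ordered_chromatic_number_def by (blast intro: Least_le)
  with \<open>card P \<le> m\<close> show ?thesis by linarith
qed

theorem theorem2:
  fixes V :: "('a::linorder) set" and E :: "'a set set" and k :: nat
  assumes "ordered_graph V E"
    and "contains_matching V E k"
    and "\<forall>k'. contains_matching V E k' \<longrightarrow> k' \<le> k"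
  shows "ordered_chromatic_number V E \<le> 2 * k + 1"
proof -
  have "\<not> contains_matching V E (Suc k)"
    using assms(3) by fastforce
  then have "interval_colourable V E V (2 * k + 1)"
    by (rule interval_colourable_if_no_matching[OF assms(1) final_segment_refl])
  then show ?thesis by (rule ordered_chromatic_number_le)
qed

end
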